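(* Consider the heterogeneous database model described in the context, with $P(R\in\mathcal D)>0$, and let $0<\alpha_1,\alpha_2\le1$. (a) Let $t_{j,\alpha_j}$ be the largest $t\ge0$ with $P(LR_j(S_j)\ge t)\ge\alpha_j$ ($j=1,2$), and $\mathcal D_{\alpha_1,\alpha_2}=\{i\in\mathcal D_1: LR_1(P_i)\ge t_{1,\alpha_1}\}\cup\{i\in\mathcal D_2: LR_2(P_i)\ge t_{2,\alpha_2}\}$. Then \[ P(R\in\mathcal D_{\alpha_1,\alpha_2}\mid R\in\mathcal D)\ge\alpha_1P(R\in\mathcal D_1\mid R\in\mathcal D)+\alpha_2P(R\in\mathcal D_2\mid R\in\mathcal D). \] (b) Let $\mathcal D^{\alpha_1,\alpha_2}=\mathcal D_1^{\alpha_1}\cup\mathcal D_2^{\alpha_2}$, where for $j=1,2$ with $P(R\in\mathcal D_j)>0$, $\mathcal D_j^{\alpha_j}$ is obtained by applying the following construction to the indices in $\mathcal D_j$ alone: order the indices $i\in\mathcal D_j$ by decreasing $r_i\pi_i$ (with $r_i=LR_j(P_i)$ and a fixed tie-breaking rule), and take the smallest initial segment whose sum of $r_i\pi_i$ is at least $\alpha_j\sum_{i\in\mathcal D_j}r_i\pi_i$ (if $P(R\in\mathcal D_j)=0$ the corresponding term below is $0$). Then the same lower bound holds: \[ P(R\in\mathcal D^{\alpha_1,\alpha_2}\mid R\in\mathcal D)\ge\alpha_1P(R\in\mathcal D_1\mid R\in\mathcal D)+\alpha_2P(R\in\mathcal D_2\mid R\in\mathcal D). \]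
   Context: Let $E_1,E_2$ be countable sets and for $j=1,2$ let $S_j,G_j$ be $E_j$-valued random variables with $P(S_j=e)>0\Rightarrow P(G_j=e)>0$ for all $e\in E_j$; define $LR_j(e)=P(S_j=e)/P(G_j=e)$ if $P(G_j=e)>0$ and $0$ otherwise. Fix $N\ge1$ and a partition $\{1,\dots,N\}=\mathcal D_1\sqcup\mathcal D_2$; write $\mathcal D=\{1,\dots,N\}$. Let $R$ be a random variable with values in $\{0,1,\dots,N\}$ ($R=0$ meaning $R\notin\mathcal D$), with $\pi_i=P(R=i)$. There are random variables $P_1,\dots,P_N$, with $P_i$ taking values in $E_j$ when $i\in\mathcal D_j$, such that conditionally on $R=k$ ($0\le k\le N$) the $P_i$ are independent, $P_i$ has the distribution of $S_j$ if $i=k\in\mathcal D_j$ and of $G_j$ if $i\ne k$, $i\in\mathcal D_j$. *)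

theory Defs
  imports "HOL-Probability.Probability"
begin

definition LR :: "'a pmf \<Rightarrow> 'a pmf \<Rightarrow> 'a \<Rightarrow> real" where
  "LR S G e = (if pmf G e > 0 then pmf S e / pmf G e else 0)"

definition LRsum :: "'a pmf \<Rightarrow> 'a pmf \<Rightarrow> 'b pmf \<Rightarrow> 'b pmf \<Rightarrow> 'a + 'b \<Rightarrow> real" where
  "LRsum S1 G1 S2 G2 v = (case v of Inl e \<Rightarrow> LR S1 G1 e | Inr e \<Rightarrow> LR S2 G2 e)"

text \<open>Distribution of P_i given R = k (values embedded into E1 + E2).\<close>
definition cond_dist ::
  "nat set \<Rightarrow> 'a pmf \<Rightarrow> 'a pmf \<Rightarrow> 'b pmf \<Rightarrow> 'b pmf \<Rightarrow> nat \<Rightarrow> nat \<Rightarrow> ('a + 'b) pmf" where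
  "cond_dist D1 S1 G1 S2 G2 k i =
     (if i \<in> D1 then map_pmf Inl (if i = k then S1 else G1)
      else map_pmf Inr (if i = k then S2 else G2))"

text \<open>Joint law of (R, (P_1,...,P_N)): given R = k, the P_i (i = 1..N) are independent
  with the distributions above.  Outside {1..N} the function is the dummy value undefined.\<close>
definition joint ::
  "nat \<Rightarrow> nat set \<Rightarrow> nat pmf \<Rightarrow> 'a pmf \<Rightarrow> 'a pmf \<Rightarrow> 'b pmf \<Rightarrow> 'b pmf
     \<Rightarrow> (nat \<times> (nat \<Rightarrow> 'a + 'b)) pmf" where
  "joint N D1 R S1 G1 S2 G2 =
     do { k \<leftarrow> R;
          x \<leftarrow> Pi_pmf {1..N} undefined (cond_dist D1 S1 G1 S2 G2 k);
          return_pmf (k, x) }"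

definition threshold :: "'a pmf \<Rightarrow> 'a pmf \<Rightarrow> real \<Rightarrow> real" where
  "threshold S G \<alpha> =
     (GREATEST t. t \<ge> 0 \<and> measure_pmf.prob S {e. LR S G e \<ge> t} \<ge> \<alpha>)"

definition prec :: "(nat \<Rightarrow> real) \<Rightarrow> (nat \<Rightarrow> nat) \<Rightarrow> nat \<Rightarrow> nat \<Rightarrow> bool" where
  "prec w tb i i' \<longleftrightarrow> w i > w i' \<or> (w i = w i' \<and> tb i < tb i')"

definition initial_segments :: "nat set \<Rightarrow> (nat \<Rightarrow> real) \<Rightarrow> (nat \<Rightarrow> nat) \<Rightarrow> nat set set" where
  "initial_segments D w tb = insert {} ((\<lambda>i. {i' \<in> D. prec w tb i' i \<or> i' = i}) ` D)"

definition top_segment :: "nat set \<Rightarrow> (nat \<Rightarrow> real) \<Rightarrow> (nat \<Rightarrow> nat) \<Rightarrow> real \<Rightarrow> nat set" where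
  "top_segment D w tb \<alpha> =
     (ARG_MIN card I. I \<in> initial_segments D w tb \<and> \<alpha> * sum w D \<le> sum w I)"

end

theory Submission
  imports Defs
begin

text \<open>
  The threshold t_j is the largest t with P(LR_j(S_j) \<ge> t) \<ge> \<alpha>_j; this
  supremum is attained because u \<mapsto> P(LR_j(S_j) \<ge> u) is left-continuous and tends to 0.  Given
  R = k \<in> D_j, the component P_k has law S_j, so index k is selected with probability at
  least \<alpha>_j; summing over k gives the bound.

  Let P_0 be the law of (P_1,...,P_N) when R \<notin> D (all components
  "innocent").  The law given R = k has density LR(x_k) with respect to P_0, so
      P(R \<in> T(x)) \<ge> E_0[ \<Sum>_{k \<in> T(x)} \<pi>_k LR(x_k) ].
  For every x the chosen top segments carry at least the fraction \<alpha>_j of the weight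
  \<Sum>_{k \<in> D_j} \<pi>_k LR(x_k), and E_0[LR(x_k)] = 1, which yields the bound.
\<close>

section \<open>Likelihood ratios\<close>

lemma LR_nonneg: "LR S G e \<ge> 0"
  unfolding LR_def by auto

lemma LRsum_nonneg: "LRsum S1 G1 S2 G2 v \<ge> 0"
  unfolding LRsum_def by (auto split: sum.splits intro: LR_nonneg)

lemma pmf_eq_LR_times:
  assumes "\<And>e. pmf S e > 0 \<Longrightarrow> pmf G e > 0"
  shows "pmf S e = pmf G e * LR S G e"
proof (cases "pmf G e > 0")
  case True
  then show ?thesis unfolding LR_def by simp
next
  case False
  then have "pmf G e = 0" "pmf S e = 0"
    using assms[of e] pmf_nonneg[of G e] pmf_nonneg[of S e] by linarith+
  then show ?thesis by simp
qed

section \<open>Upper tails of a real function under a pmf\<close>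

text \<open>Upper tails vanish at infinity (continuity from above along the empty intersection).\<close>
lemma tail_prob_tendsto_zero:
  fixes f :: "'a \<Rightarrow> real"
  shows "(\<lambda>n. measure_pmf.prob M {e. real n \<le> f e}) \<longlonglongrightarrow> 0"
proof -
  have "(\<lambda>n. measure_pmf.prob M {e. real n \<le> f e})
          \<longlonglongrightarrow> measure_pmf.prob M (\<Inter>n. {e. real n \<le> f e})"
    by (intro measure_pmf.finite_Lim_measure_decseq) (auto simp: decseq_def)
  moreover have "(\<Inter>n. {e. real n \<le> f e}) = {}"
  proof -
    have "\<not> (\<forall>n. real n \<le> f e)" for e
      by (metis not_le reals_Archimedean2)
    then show ?thesis by auto
  qed
  ultimately show ?thesis by simp
qed

text \<open>The function u \<mapsto> P(f \<ge> u) is left-continuous, so a lower bound valid below s persists at s.\<close>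
lemma tail_prob_left_limit:
  fixes f :: "'a \<Rightarrow> real"
  assumes below: "\<And>t. t < s \<Longrightarrow> \<alpha> \<le> measure_pmf.prob M {e. t \<le> f e}"
  shows "\<alpha> \<le> measure_pmf.prob M {e. s \<le> f e}"
proof -
  define B where "B n = {e. s - 1 / real (Suc n) \<le> f e}" for n
  have "B n \<subseteq> B m" if "m \<le> n" for m n
  proof -
    have "1 / real (Suc n) \<le> 1 / real (Suc m)"
      using that by (intro frac_le) simp_all
    then show ?thesis unfolding B_def by auto
  qed
  then have "decseq B" by (simp add: decseq_def)
  then have "(\<lambda>n. measure_pmf.prob M (B n)) \<longlonglongrightarrow> measure_pmf.prob M (\<Inter>n. B n)"
    by (intro measure_pmf.finite_Lim_measure_decseq) auto
  moreover have "(\<Inter>n. B n) = {e. s \<le> f e}"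
  proof (intro set_eqI iffI)
    fix e assume e: "e \<in> (\<Inter>n. B n)"
    show "e \<in> {e. s \<le> f e}"
    proof (rule ccontr)
      assume "e \<notin> {e. s \<le> f e}"
      then have "0 < s - f e" by simp
      then obtain n where "1 / real (Suc n) < s - f e"
        by (rule nat_approx_posE)
      moreover have "s - 1 / real (Suc n) \<le> f e" using e unfolding B_def by auto
      ultimately show False by linarith
    qed
  next
    fix e assume "e \<in> {e. s \<le> f e}"
    then have "s \<le> f e" by simp
    have "s - 1 / real (Suc n) \<le> f e" for n
    proof -
      have "0 \<le> 1 / real (Suc n)" by simp
      with \<open>s \<le> f e\<close> show ?thesis by linarith
    qed
    then show "e \<in> (\<Inter>n. B n)" by (simp add: B_def)
  qed
  moreover have "\<alpha> \<le> measure_pmf.prob M (B n)" for n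
    unfolding B_def by (rule below) simp
  ultimately show ?thesis
    by (metis (no_types, lifting) LIMSEQ_le_const)
qed

lemma threshold_tail_prob:
  assumes "0 < \<alpha>" "\<alpha> \<le> 1"
  shows "\<alpha> \<le> measure_pmf.prob S {e. threshold S G \<alpha> \<le> LR S G e}"
proof -
  define F where "F t = measure_pmf.prob S {e. t \<le> LR S G e}" for t
  define M where "M = {t. t \<ge> 0 \<and> F t \<ge> \<alpha>}"
  have F_anti: "F t \<le> F s" if "s \<le> t" for s t
    unfolding F_def using that by (intro measure_pmf.finite_measure_mono) auto
  have "0 \<in> M"
    using assms LR_nonneg[of S G] by (simp add: M_def F_def)
  have "eventually (\<lambda>n. F (real n) < \<alpha>) sequentially"
    using order_tendstoD(2)[OF tail_prob_tendsto_zero assms(1)] unfolding F_def .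
  then obtain b where b: "F (real b) < \<alpha>"
    by (auto simp: eventually_sequentially)
  have ub: "t \<le> real b" if "t \<in> M" for t
  proof (rule ccontr)
    assume "\<not> t \<le> real b"
    then have "F t \<le> F (real b)" by (intro F_anti) simp
    with b that show False by (simp add: M_def)
  qed
  define s where "s = Sup M"
  have bdd: "bdd_above M" using ub by (auto simp: bdd_above_def)
  have le_s: "t \<le> s" if "t \<in> M" for t
    unfolding s_def using that bdd by (rule cSup_upper)
  have "\<alpha> \<le> F s"
    unfolding F_def
  proof (rule tail_prob_left_limit)
    fix t assume "t < s"
    then obtain t' where "t' \<in> M" "t < t'"
      using less_cSup_iff[OF _ bdd] \<open>0 \<in> M\<close> unfolding s_def by blast
    then show "\<alpha> \<le> measure_pmf.prob S {e. t \<le> LR S G e}"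
      using F_anti[of t t'] by (simp add: M_def F_def)
  qed
  then have "s \<in> M" using le_s \<open>0 \<in> M\<close> by (auto simp: M_def)
  have "threshold S G \<alpha> = s"
    unfolding threshold_def
    by (rule Greatest_equality) (use \<open>s \<in> M\<close> le_s in \<open>auto simp: M_def F_def\<close>)
  with \<open>\<alpha> \<le> F s\<close> show ?thesis by (simp add: F_def)
qed

section \<open>Top segments\<close>

lemma prec_last_element:
  fixes w :: "nat \<Rightarrow> real"
  assumes "finite D" "D \<noteq> {}" "inj_on tb D"
  obtains i where "i \<in> D" "\<And>i'. i' \<in> D \<Longrightarrow> prec w tb i' i \<or> i' = i"
proof -
  define m where "m = Min (w ` D)"
  define D' where "D' = {i \<in> D. w i = m}"
  have "m \<in> w ` D" using assms by (simp add: m_def)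
  then have "D' \<noteq> {}" "finite D'" using assms(1) by (auto simp: D'_def)
  then have "Max (tb ` D') \<in> tb ` D'" by simp
  then obtain i where i: "i \<in> D'" "tb i = Max (tb ` D')" by (metis imageE)
  show ?thesis
  proof (rule that)
    show "i \<in> D" using i by (simp add: D'_def)
    fix i' assume i': "i' \<in> D"
    have "m \<le> w i'" using assms i' by (simp add: m_def)
    moreover have "tb i' \<le> tb i" if "w i' = m"
      using that i' i \<open>finite D'\<close> by (simp add: D'_def)
    moreover have "tb i' = tb i \<Longrightarrow> i' = i"
      using assms(3) i' \<open>i \<in> D\<close> by (meson inj_onD)
    ultimately show "prec w tb i' i \<or> i' = i"
      using i by (force simp: prec_def D'_def)
  qed
qed

text \<open>The selected top segment lies in D and carries at least the fraction \<alpha> of the total weight;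
  it exists because D itself is an initial segment.\<close>
lemma top_segment_covers:
  fixes w :: "nat \<Rightarrow> real"
  assumes "finite D" "inj_on tb D" "\<And>i. i \<in> D \<Longrightarrow> w i \<ge> 0" "\<alpha> \<le> 1"
  shows "top_segment D w tb \<alpha> \<subseteq> D" "\<alpha> * sum w D \<le> sum w (top_segment D w tb \<alpha>)"
proof -
  have "D \<in> initial_segments D w tb"
  proof (cases "D = {}")
    case False
    then obtain i where "i \<in> D" "\<And>i'. i' \<in> D \<Longrightarrow> prec w tb i' i \<or> i' = i"
      using prec_last_element assms(1,2) by blast
    then have "D = {i' \<in> D. prec w tb i' i \<or> i' = i}" by auto
    with \<open>i \<in> D\<close> show ?thesis unfolding initial_segments_def by blast
  qed (simp add: initial_segments_def)
  moreover have "\<alpha> * sum w D \<le> sum w D"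
    using assms(3,4) mult_right_mono[of \<alpha> 1 "sum w D"] by (simp add: sum_nonneg)
  ultimately have "top_segment D w tb \<alpha> \<in> initial_segments D w tb
      \<and> \<alpha> * sum w D \<le> sum w (top_segment D w tb \<alpha>)"
    unfolding top_segment_def by (intro arg_min_natI) blast
  then show "top_segment D w tb \<alpha> \<subseteq> D" "\<alpha> * sum w D \<le> sum w (top_segment D w tb \<alpha>)"
    by (auto simp: initial_segments_def)
qed

section \<open>The heterogeneous database model\<close>

locale database_model =
  fixes N :: nat and D1 D2 :: "nat set" and R :: "nat pmf"
    and S1 G1 :: "'a pmf" and S2 G2 :: "'b pmf"
  assumes part: "D1 \<union> D2 = {1..N}" "D1 \<inter> D2 = {}"
    and Rrange: "set_pmf R \<subseteq> {0..N}"
    and supp1: "\<And>e. pmf S1 e > 0 \<Longrightarrow> pmf G1 e > 0"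
    and supp2: "\<And>e. pmf S2 e > 0 \<Longrightarrow> pmf G2 e > 0"
begin

abbreviation "LRv \<equiv> LRsum S1 G1 S2 G2"
abbreviation "J \<equiv> joint N D1 R S1 G1 S2 G2"

text \<open>Conditional law of (P_1,...,P_N) given R = k; for k = 0 all components are innocent.\<close>
definition cond_law :: "nat \<Rightarrow> (nat \<Rightarrow> 'a + 'b) pmf" where
  "cond_law k = Pi_pmf {1..N} undefined (cond_dist D1 S1 G1 S2 G2 k)"

definition selected :: "(nat \<Rightarrow> nat) \<Rightarrow> nat set \<Rightarrow> real \<Rightarrow> (nat \<Rightarrow> 'a + 'b) \<Rightarrow> nat set" where
  "selected tb Dj \<alpha> x = (if measure_pmf.prob R Dj > 0
      then top_segment Dj (\<lambda>i. LRv (x i) * pmf R i) tb \<alpha> else {})"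

lemma finite_parts: "finite D1" "finite D2"
  using part by (metis finite_Un finite_atLeastAtMost)+

lemma sum_parts: "(\<Sum>k\<in>{1..N}. f k) = (\<Sum>k\<in>D1. f k) + (\<Sum>k\<in>D2. f k)"
  using part finite_parts by (metis sum.union_disjoint)

lemma prob_parts:
  "measure_pmf.prob R D1 = (\<Sum>k\<in>D1. pmf R k)" "measure_pmf.prob R D2 = (\<Sum>k\<in>D2. pmf R k)"
  using finite_parts by (simp_all add: measure_measure_pmf_finite)

lemma emeasure_joint:
  "emeasure J A = (\<Sum>k\<in>{0..N}. emeasure (cond_law k) {x. (k, x) \<in> A} * ennreal (pmf R k))"
proof -
  have J_bind: "J = bind_pmf R (\<lambda>k. map_pmf (Pair k) (cond_law k))"
    unfolding joint_def cond_law_def map_pmf_def by simp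
  have "(\<lambda>k. emeasure (cond_law k) (Pair k -` A)) = (\<lambda>k. emeasure (cond_law k) {x. (k, x) \<in> A})"
    by (auto simp: vimage_def)
  then show ?thesis
    unfolding J_bind emeasure_bind_pmf emeasure_map_pmf
    by (simp only:) (rule nn_integral_measure_pmf_support, use Rrange in auto)
qed

lemma measure_joint:
  "measure J A = (\<Sum>k\<in>{0..N}. measure (cond_law k) {x. (k, x) \<in> A} * pmf R k)"
proof -
  have "ennreal (measure J A) = ennreal (\<Sum>k\<in>{0..N}. measure (cond_law k) {x. (k, x) \<in> A} * pmf R k)"
    using emeasure_joint[of A]
    by (simp add: measure_pmf.emeasure_eq_measure ennreal_mult sum_ennreal[symmetric] sum_nonneg)
  then show ?thesis by (simp add: sum_nonneg)
qed

lemma own_component_tail: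
  shows "k \<in> D1 \<Longrightarrow> measure (cond_law k) {x. t \<le> LRv (x k)} = measure_pmf.prob S1 {e. t \<le> LR S1 G1 e}"
    and "k \<in> D2 \<Longrightarrow> measure (cond_law k) {x. t \<le> LRv (x k)} = measure_pmf.prob S2 {e. t \<le> LR S2 G2 e}"
proof -
  have tail: "measure (cond_law k) {x. t \<le> LRv (x k)}
      = measure (cond_dist D1 S1 G1 S2 G2 k k) {v. t \<le> LRv v}" if "k \<in> {1..N}" for k
  proof -
    have "measure (cond_law k) {x. t \<le> LRv (x k)}
        = measure (map_pmf (\<lambda>x. x k) (cond_law k)) {v. t \<le> LRv v}"
      by (simp add: vimage_def)
    also have "map_pmf (\<lambda>x. x k) (cond_law k) = cond_dist D1 S1 G1 S2 G2 k k"
      unfolding cond_law_def using that by (simp add: Pi_pmf_component)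
    finally show ?thesis .
  qed
  show "k \<in> D1 \<Longrightarrow> measure (cond_law k) {x. t \<le> LRv (x k)} = measure_pmf.prob S1 {e. t \<le> LR S1 G1 e}"
    using part by (subst tail) (auto simp: cond_dist_def vimage_def LRsum_def)
  show "k \<in> D2 \<Longrightarrow> measure (cond_law k) {x. t \<le> LRv (x k)} = measure_pmf.prob S2 {e. t \<le> LR S2 G2 e}"
    using part by (subst tail) (auto simp: cond_dist_def vimage_def LRsum_def)
qed

lemma pmf_own_component:
  assumes "k \<in> {1..N}"
  shows "pmf (cond_dist D1 S1 G1 S2 G2 k k) v = pmf (cond_dist D1 S1 G1 S2 G2 0 k) v * LRv v"
proof -
  have "k \<noteq> 0" using assms by simp
  have off_Inl: "pmf (map_pmf Inl S) (Inr e) = 0" for S :: "'a pmf" and e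
    by (auto intro!: pmf_map_outside)
  have off_Inr: "pmf (map_pmf Inr S) (Inl e) = 0" for S :: "'b pmf" and e
    by (auto intro!: pmf_map_outside)
  show ?thesis
  proof (cases v)
    case (Inl e)
    then show ?thesis
      using \<open>k \<noteq> 0\<close> pmf_eq_LR_times[of S1 G1 e, OF supp1]
      by (simp add: cond_dist_def pmf_map_inj' LRsum_def off_Inr)
  next
    case (Inr e)
    then show ?thesis
      using \<open>k \<noteq> 0\<close> pmf_eq_LR_times[of S2 G2 e, OF supp2]
      by (simp add: cond_dist_def pmf_map_inj' LRsum_def off_Inl)
  qed
qed

lemma pmf_cond_law:
  assumes k: "k \<in> {1..N}"
  shows "pmf (cond_law k) x = pmf (cond_law 0) x * LRv (x k)"
proof -
  let ?p = "\<lambda>j l. pmf (cond_dist D1 S1 G1 S2 G2 j l) (x l)"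
  have others: "?p k l = ?p 0 l" if "l \<in> {1..N} - {k}" for l
    using that by (auto simp: cond_dist_def)
  have "(\<Prod>l\<in>{1..N}. ?p k l) = ?p k k * (\<Prod>l\<in>{1..N}-{k}. ?p k l)"
    using k by (simp add: prod.remove)
  also have "\<dots> = (?p 0 k * (\<Prod>l\<in>{1..N}-{k}. ?p 0 l)) * LRv (x k)"
    using pmf_own_component[OF k] others by simp
  also have "\<dots> = (\<Prod>l\<in>{1..N}. ?p 0 l) * LRv (x k)"
    using k by (simp add: prod.remove)
  finally have prod_eq: "(\<Prod>l\<in>{1..N}. ?p k l) = (\<Prod>l\<in>{1..N}. ?p 0 l) * LRv (x k)" .
  show ?thesis
    unfolding cond_law_def pmf_Pi[OF finite_atLeastAtMost]
    by (simp only: prod_eq if_distrib[where f = "\<lambda>p. p * LRv (x k)"] mult_zero_left)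
qed

lemma emeasure_cond_law:
  assumes "k \<in> {1..N}"
  shows "emeasure (cond_law k) B = (\<integral>\<^sup>+x. ennreal (indicator B x * LRv (x k)) \<partial>cond_law 0)"
proof -
  have "emeasure (cond_law k) B = (\<integral>\<^sup>+x. ennreal (pmf (cond_law k) x) * indicator B x \<partial>count_space UNIV)"
    by (simp flip: nn_integral_measure_pmf)
  also have "\<dots> = (\<integral>\<^sup>+x. ennreal (pmf (cond_law 0) x) * ennreal (indicator B x * LRv (x k)) \<partial>count_space UNIV)"
    using pmf_cond_law[OF assms] ennreal_mult[OF pmf_nonneg LRsum_nonneg]
    by (intro nn_integral_cong) (auto simp: indicator_def)
  finally show ?thesis
    by (simp add: nn_integral_measure_pmf)
qed

lemma expected_LR:
  "k \<in> {1..N} \<Longrightarrow> (\<integral>\<^sup>+x. ennreal (LRv (x k)) \<partial>cond_law 0) = 1"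
  using emeasure_cond_law[of k UNIV] by (simp add: measure_pmf.emeasure_space_1)

text \<open>Change of measure: the probability of catching R with a rule T is at least the
  innocent expectation of the weight \<pi>_k LR(x_k) collected by T.\<close>
lemma catch_prob_ge_expected_weight:
  "(\<integral>\<^sup>+x. ennreal (\<Sum>k\<in>{1..N}. if k \<in> T x then LRv (x k) * pmf R k else 0) \<partial>cond_law 0)
     \<le> emeasure J {(k, x). k \<in> T x}"
proof -
  have summand: "ennreal (if k \<in> T x then LRv (x k) * pmf R k else 0)
      = ennreal (indicator {x. k \<in> T x} x * LRv (x k)) * ennreal (pmf R k)" for x k
    by (cases "k \<in> T x") (simp_all add: ennreal_mult LRsum_nonneg)
  have "(\<integral>\<^sup>+x. ennreal (\<Sum>k\<in>{1..N}. if k \<in> T x then LRv (x k) * pmf R k else 0) \<partial>cond_law 0)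
      = (\<integral>\<^sup>+x. (\<Sum>k\<in>{1..N}. ennreal (indicator {x. k \<in> T x} x * LRv (x k)) * ennreal (pmf R k)) \<partial>cond_law 0)"
    by (intro nn_integral_cong)
      (simp add: LRsum_nonneg summand flip: sum_ennreal)
  also have "\<dots> = (\<Sum>k\<in>{1..N}. emeasure (cond_law k) {x. k \<in> T x} * ennreal (pmf R k))"
    by (simp add: nn_integral_sum nn_integral_multc emeasure_cond_law)
  also have "\<dots> \<le> (\<Sum>k\<in>{0..N}. emeasure (cond_law k) {x. k \<in> T x} * ennreal (pmf R k))"
    by (intro sum_mono2) auto
  also have "\<dots> = emeasure J {(k, x). k \<in> T x}"
    by (simp add: emeasure_joint)
  finally show ?thesis .
qed

lemma expected_weight:
  assumes "\<And>k. c k \<ge> 0"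
  shows "(\<integral>\<^sup>+x. ennreal (\<Sum>k\<in>{1..N}. c k * (LRv (x k) * pmf R k)) \<partial>cond_law 0)
     = ennreal (\<Sum>k\<in>{1..N}. c k * pmf R k)"
proof -
  have "(\<integral>\<^sup>+x. ennreal (\<Sum>k\<in>{1..N}. c k * (LRv (x k) * pmf R k)) \<partial>cond_law 0)
      = (\<integral>\<^sup>+x. (\<Sum>k\<in>{1..N}. ennreal (c k * pmf R k) * ennreal (LRv (x k))) \<partial>cond_law 0)"
    using assms
    by (intro nn_integral_cong)
      (auto simp: LRsum_nonneg ennreal_mult[symmetric] mult_ac intro!: sum_ennreal[symmetric] sum.cong)
  also have "\<dots> = (\<Sum>k\<in>{1..N}. ennreal (c k * pmf R k))"
    by (simp add: nn_integral_sum nn_integral_cmult expected_LR)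
  also have "\<dots> = ennreal (\<Sum>k\<in>{1..N}. c k * pmf R k)"
    using assms by (simp add: sum_ennreal)
  finally show ?thesis .
qed

text \<open>Pointwise, the selection within D_j collects at least the fraction \<alpha> of the weight of D_j;
  if R \<notin> D_j almost surely, that weight is zero.\<close>
lemma selected_weight:
  assumes "Dj \<subseteq> {1..N}" "inj_on tb Dj" "\<alpha> \<le> 1"
  shows "selected tb Dj \<alpha> x \<subseteq> Dj"
    and "\<alpha> * (\<Sum>k\<in>Dj. LRv (x k) * pmf R k) \<le> (\<Sum>k\<in>selected tb Dj \<alpha> x. LRv (x k) * pmf R k)"
proof -
  have fin: "finite Dj" using assms(1) finite_subset by blast
  have nonneg: "LRv (x k) * pmf R k \<ge> 0" for k by (simp add: LRsum_nonneg)
  show "selected tb Dj \<alpha> x \<subseteq> Dj"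
    unfolding selected_def using top_segment_covers(1)[OF fin assms(2) _ assms(3)] nonneg by auto
  show "\<alpha> * (\<Sum>k\<in>Dj. LRv (x k) * pmf R k) \<le> (\<Sum>k\<in>selected tb Dj \<alpha> x. LRv (x k) * pmf R k)"
  proof (cases "measure_pmf.prob R Dj > 0")
    case True
    then show ?thesis
      unfolding selected_def using top_segment_covers(2)[OF fin assms(2) _ assms(3)] nonneg by auto
  next
    case False
    then have "pmf R k = 0" if "k \<in> Dj" for k
      using that measure_pmf_posI[of k R Dj] by (auto simp: set_pmf_iff)
    then show ?thesis using False by (simp add: selected_def)
  qed
qed

lemma threshold_rule_bound:
  assumes "0 < \<alpha>1" "\<alpha>1 \<le> 1" "0 < \<alpha>2" "\<alpha>2 \<le> 1"
  shows "\<alpha>1 * measure_pmf.prob R D1 + \<alpha>2 * measure_pmf.prob R D2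
     \<le> measure J {(k, x). (k \<in> D1 \<and> threshold S1 G1 \<alpha>1 \<le> LRv (x k))
                       \<or> (k \<in> D2 \<and> threshold S2 G2 \<alpha>2 \<le> LRv (x k))}" (is "_ \<le> measure J ?A")
proof -
  define f where "f k = measure (cond_law k) {x. (k, x) \<in> ?A} * pmf R k" for k
  have "\<alpha>1 * pmf R k \<le> f k" if "k \<in> D1" for k
  proof -
    have "{x. (k, x) \<in> ?A} = {x. threshold S1 G1 \<alpha>1 \<le> LRv (x k)}"
      using that part by auto
    then show ?thesis
      using that threshold_tail_prob[OF assms(1,2), of S1 G1]
      by (simp add: f_def own_component_tail mult_right_mono)
  qed
  moreover have "\<alpha>2 * pmf R k \<le> f k" if "k \<in> D2" for k
  proof -
    have "{x. (k, x) \<in> ?A} = {x. threshold S2 G2 \<alpha>2 \<le> LRv (x k)}"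
      using that part by auto
    then show ?thesis
      using that threshold_tail_prob[OF assms(3,4), of S2 G2]
      by (simp add: f_def own_component_tail mult_right_mono)
  qed
  ultimately have "\<alpha>1 * measure_pmf.prob R D1 + \<alpha>2 * measure_pmf.prob R D2
      \<le> (\<Sum>k\<in>D1. f k) + (\<Sum>k\<in>D2. f k)"
    unfolding prob_parts sum_distrib_left by (intro add_mono sum_mono)
  also have "\<dots> = (\<Sum>k\<in>{1..N}. f k)"
    by (rule sum_parts[symmetric])
  also have "\<dots> \<le> (\<Sum>k\<in>{0..N}. f k)"
    by (intro sum_mono2) (auto simp: f_def)
  also have "\<dots> = measure J ?A"
    by (simp add: f_def measure_joint)
  finally show ?thesis .
qed

lemma top_segment_rule_bound:
  assumes "0 < \<alpha>1" "\<alpha>1 \<le> 1" "0 < \<alpha>2" "\<alpha>2 \<le> 1" and tb: "inj_on tb {1..N}"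
  shows "\<alpha>1 * measure_pmf.prob R D1 + \<alpha>2 * measure_pmf.prob R D2
     \<le> measure J {(k, x). k \<in> selected tb D1 \<alpha>1 x \<union> selected tb D2 \<alpha>2 x}"
proof -
  define T where "T x = selected tb D1 \<alpha>1 x \<union> selected tb D2 \<alpha>2 x" for x
  define w where "w x k = LRv (x k) * pmf R k" for x k
  define c where "c k = (if k \<in> D1 then \<alpha>1 else \<alpha>2)" for k
  have sub: "D1 \<subseteq> {1..N}" "D2 \<subseteq> {1..N}" using part by auto
  have tbD: "inj_on tb D1" "inj_on tb D2" using tb sub by (auto intro: inj_on_subset)
  have collected: "(\<Sum>k\<in>{1..N}. c k * w x k) \<le> (\<Sum>k\<in>{1..N}. if k \<in> T x then w x k else 0)" for x
  proof -
    note sel1 = selected_weight[OF sub(1) tbD(1) assms(2), of x]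
    note sel2 = selected_weight[OF sub(2) tbD(2) assms(4), of x]
    have "(\<Sum>k\<in>{1..N}. c k * w x k) = \<alpha>1 * sum (w x) D1 + \<alpha>2 * sum (w x) D2"
      unfolding sum_parts using part by (auto simp: c_def sum_distrib_left intro!: sum.cong)
    also have "\<dots> \<le> sum (w x) (selected tb D1 \<alpha>1 x) + sum (w x) (selected tb D2 \<alpha>2 x)"
      using sel1(2) sel2(2) by (simp add: w_def add_mono)
    also have "\<dots> = sum (w x) (T x)"
      unfolding T_def using sel1(1) sel2(1) part finite_parts
      by (subst sum.union_disjoint) (auto intro: finite_subset)
    also have "\<dots> = (\<Sum>k\<in>{1..N}. if k \<in> T x then w x k else 0)"
    proof -
      have "{k \<in> {1..N}. k \<in> T x} = T x"
        using sel1(1) sel2(1) sub by (auto simp: T_def)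
      then show ?thesis
        using sum.inter_filter[of "{1..N}" "w x" "\<lambda>k. k \<in> T x"] by simp
    qed
    finally show ?thesis .
  qed
  have "ennreal (\<alpha>1 * measure_pmf.prob R D1 + \<alpha>2 * measure_pmf.prob R D2)
      = ennreal (\<Sum>k\<in>{1..N}. c k * pmf R k)"
    unfolding sum_parts prob_parts using part
    by (auto simp: c_def sum_distrib_left intro!: arg_cong[where f = ennreal] arg_cong2[where f = "(+)"] sum.cong)
  also have "\<dots> = (\<integral>\<^sup>+x. ennreal (\<Sum>k\<in>{1..N}. c k * w x k) \<partial>cond_law 0)"
    unfolding w_def by (rule expected_weight[symmetric]) (use assms in \<open>simp add: c_def\<close>)
  also have "\<dots> \<le> (\<integral>\<^sup>+x. ennreal (\<Sum>k\<in>{1..N}. if k \<in> T x then w x k else 0) \<partial>cond_law 0)"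
    using collected by (intro nn_integral_mono ennreal_leI)
  also have "\<dots> \<le> emeasure J {(k, x). k \<in> T x}"
    unfolding w_def by (rule catch_prob_ge_expected_weight)
  finally show ?thesis
    by (simp add: T_def measure_pmf.emeasure_eq_measure)
qed

end

theorem mainTheorem7:
  fixes N :: nat and D1 D2 :: "nat set" and R :: "nat pmf"
    and S1 G1 :: "'a pmf" and S2 G2 :: "'b pmf"
    and \<alpha>1 \<alpha>2 :: real and tb :: "nat \<Rightarrow> nat"
  assumes N: "N \<ge> 1"
    and part: "D1 \<union> D2 = {1..N}" "D1 \<inter> D2 = {}"
    and Rrange: "set_pmf R \<subseteq> {0..N}"
    and supp1: "\<And>e. pmf S1 e > 0 \<Longrightarrow> pmf G1 e > 0"
    and supp2: "\<And>e. pmf S2 e > 0 \<Longrightarrow> pmf G2 e > 0"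
    and posD: "measure_pmf.prob R {1..N} > 0"
    and a1: "0 < \<alpha>1" "\<alpha>1 \<le> 1"
    and a2: "0 < \<alpha>2" "\<alpha>2 \<le> 1"
    and tb: "inj_on tb {1..N}"
  shows
   "(let J = joint N D1 R S1 G1 S2 G2;
         LRv = LRsum S1 G1 S2 G2;
         pD = measure_pmf.prob R {1..N};
         rhs = \<alpha>1 * (measure_pmf.prob R D1 / pD) + \<alpha>2 * (measure_pmf.prob R D2 / pD);
         t1 = threshold S1 G1 \<alpha>1;
         t2 = threshold S2 G2 \<alpha>2;
         Dsel = (\<lambda>Dj \<alpha>j x. if measure_pmf.prob R Dj > 0
                   then top_segment Dj (\<lambda>i. LRv (x i) * pmf R i) tb \<alpha>j else {})
     in
      measure_pmf.prob J
         {(k, x). (k \<in> D1 \<and> LRv (x k) \<ge> t1) \<or> (k \<in> D2 \<and> LRv (x k) \<ge> t2)} / pD \<ge> rhs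
    \<and> measure_pmf.prob J
         {(k, x). k \<in> Dsel D1 \<alpha>1 x \<union> Dsel D2 \<alpha>2 x} / pD \<ge> rhs)"
proof -
  interpret database_model N D1 D2 R S1 G1 S2 G2
    using part Rrange supp1 supp2 by unfold_locales auto
  let ?pD = "measure_pmf.prob R {1..N}"
  let ?lower = "\<alpha>1 * measure_pmf.prob R D1 + \<alpha>2 * measure_pmf.prob R D2"
  have rhs: "\<alpha>1 * (measure_pmf.prob R D1 / ?pD) + \<alpha>2 * (measure_pmf.prob R D2 / ?pD) = ?lower / ?pD"
    by (simp add: add_divide_distrib)
  note a = threshold_rule_bound[OF a1 a2]
  note b = top_segment_rule_bound[OF a1 a2 tb, unfolded selected_def]
  show ?thesis
    unfolding Let_def rhs
    using divide_right_mono[OF a, of ?pD] divide_right_mono[OF b, of ?pD] posD by simp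
qed

end
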